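(* Let $0<k<n$ and let $\omega=(c_1,\dots,c_n)\in\{0,1\}^n$ with exactly $k$ ones, viewed as a weight in the Weyl orbit $W\omega_k$. Let $l_1<l_2<\dots<l_q$ be the indices $j\in\{1,\dots,n-1\}$ with $c_j-c_{j+1}=-1$ and $r_1<r_2<\dots<r_p$ the indices $j\in\{1,\dots,n-1\}$ with $c_j-c_{j+1}=1$ (so $\omega=\sum_i\omega_{r_i}-\sum_i\omega_{l_i}$, and the two sequences interlace). Assume $r_1<l_1<r_2<l_2<\cdots$ (so $q\in\{p-1,p\}$). Define integers recursively by $f(r_1)=r_1$, $f(l_i)=l_i-f(r_i)$, $f(r_{i+1})=r_{i+1}-f(l_i)$. Then: (1) $0<f(r_i)\le r_i$ and $0<f(l_i)<l_i$ for all $i$; in particular all these labels lie in $\{1,\dots,n-1\}$. (2) Let $D$ be the directed labelled graph with vertices $A,R_1,\dots,R_p,L_1,\dots,L_q$ and edges $A\to R_1$ labelled $r_1$, $R_i\to R_{i+1}$ labelled $r_{i+1}$, $A\to L_1$ labelled $l_1$, $L_i\to L_{i+1}$ labelled $l_{i+1}$, $R_i\to L_i$ labelled $f(l_i)$ ($1\le i\le q$), and $L_i\to R_{i+1}$ labelled $f(r_{i+1})$ ($1\le i\le p-1$). Then the paths $A,R_1,\dots,R_p$ and $A,L_1,\dots,L_q$ are geodesics (of lengths $\sum_i\omega_{r_i}$ and $\sum_i\omega_{l_i}$ respectively), and $D$ has coherent geodesics at $A$ (every pair $(A,v)$ has coherent geodesics). The same conclusions hold in the case $l_1<r_1<l_2<r_2<\cdots$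 for the graph obtained by the same rules with the roles of $(l_i,L_i)$ and $(r_i,R_i)$ interchanged.
   Context: Weights of $\mathrm{SL}_n$ are identified with $\mathbb{Z}^n/\mathbb{Z}(1,\dots,1)$; $\omega_i=e_1+\dots+e_i$, with $\omega_0=0$ and indices mod $n$; the Weyl group $W=S_n$ permutes coordinates; weights are partially ordered by $\mu\le\nu$ iff $\nu-\mu$ is a nonnegative integer combination of positive roots. In a directed graph with edges labelled by $\{0,\dots,n-1\}$, a path may traverse edges in either direction; its length is the sum over its edges of $\omega_a$ (edge labelled $a$ traversed along its direction) or $\omega_{n-a}$ (traversed against it). A geodesic between two vertices is a path between them of minimal length (no path between them has strictly smaller length); a pair $(a,b)$ has coherent geodesics if all geodesics between $a$ and $b$ have the same length. (The graph $D$ is the dual graph of the length-one "triangular diagram" web $T_\omega$ with vertex $A$.) *)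

theory Defs
  imports Main
begin

(* Weights of SL_n: integer vectors indexed by coordinates 1..n (values at other
   indices are irrelevant), considered modulo Z(1,...,1). *)

text \<open>Fundamental weight omega_j = e_1 + ... + e_j, index taken mod n (omega_0 = omega_n = 0).\<close>
definition omega :: "nat \<Rightarrow> nat \<Rightarrow> nat \<Rightarrow> int" where
  "omega n j = (\<lambda>i. if 1 \<le> i \<and> i \<le> j mod n then 1 else 0)"

definition weq :: "nat \<Rightarrow> (nat \<Rightarrow> int) \<Rightarrow> (nat \<Rightarrow> int) \<Rightarrow> bool" where
  "weq n \<mu> \<nu> \<longleftrightarrow> (\<exists>t::int. \<forall>i\<in>{1..n}. \<nu> i - \<mu> i = t)"

text \<open>mu <= nu iff nu - mu is (modulo Z(1,...,1)) a nonnegative integer combination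
  of the positive roots e_i - e_j (1 <= i < j <= n); c i j is the coefficient of e_i - e_j.\<close>
definition wle :: "nat \<Rightarrow> (nat \<Rightarrow> int) \<Rightarrow> (nat \<Rightarrow> int) \<Rightarrow> bool" where
  "wle n \<mu> \<nu> \<longleftrightarrow> (\<exists>(t::int) (c::nat \<Rightarrow> nat \<Rightarrow> nat). \<forall>i\<in>{1..n}.
      \<nu> i - \<mu> i = t + (\<Sum>j\<in>{i<..n}. int (c i j)) - (\<Sum>j\<in>{1..<i}. int (c j i)))"

definition wless :: "nat \<Rightarrow> (nat \<Rightarrow> int) \<Rightarrow> (nat \<Rightarrow> int) \<Rightarrow> bool" where
  "wless n \<mu> \<nu> \<longleftrightarrow> wle n \<mu> \<nu> \<and> \<not> weq n \<mu> \<nu>"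

text \<open>A path is a list of steps (u, a, v, d): the edge (u,a,v) traversed along its direction
  (d = True, from u to v) or against it (d = False, from v to u).\<close>
fun is_path :: "('v \<times> nat \<times> 'v) set \<Rightarrow> 'v \<Rightarrow> ('v \<times> nat \<times> 'v \<times> bool) list \<Rightarrow> 'v \<Rightarrow> bool" where
  "is_path E s [] t = (s = t)"
| "is_path E s ((u, a, v, d) # ps) t =
     ((u, a, v) \<in> E \<and> (if d then s = u \<and> is_path E v ps t else s = v \<and> is_path E u ps t))"

definition path_len :: "nat \<Rightarrow> ('v \<times> nat \<times> 'v \<times> bool) list \<Rightarrow> nat \<Rightarrow> int" where
  "path_len n ps = (\<lambda>i. sum_list (map (\<lambda>(u, a, v, d). omega n (if d then a else n - a mod n) i) ps))"

definition geodesic :: "nat \<Rightarrow> ('v \<times> nat \<times> 'v) set \<Rightarrow> 'v \<Rightarrow> 'v \<Rightarrow> ('v \<times> nat \<times> 'v \<times> bool) list \<Rightarrow> bool" where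
  "geodesic n E s t ps \<longleftrightarrow> is_path E s ps t \<and>
     \<not> (\<exists>qs. is_path E s qs t \<and> wless n (path_len n qs) (path_len n ps))"

definition coherent :: "nat \<Rightarrow> ('v \<times> nat \<times> 'v) set \<Rightarrow> 'v \<Rightarrow> 'v \<Rightarrow> bool" where
  "coherent n E s t \<longleftrightarrow> (\<forall>ps qs. geodesic n E s t ps \<and> geodesic n E s t qs \<longrightarrow>
       weq n (path_len n ps) (path_len n qs))"

text \<open>Vertices of D: A, R_1.., L_1.. (0-based: VR i is R_{i+1}).\<close>
datatype vert = VA | VR nat | VL nat

text \<open>The recursion f, for the chain starting first (xs = x_1 < y_1 < x_2 < ...), 0-based:
  fX 0 = x_1, fY i = y_i - fX i, fX (i+1) = x_{i+1} - fY i.\<close>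
primrec fX :: "nat list \<Rightarrow> nat list \<Rightarrow> nat \<Rightarrow> int" where
  "fX xs ys 0 = int (xs ! 0)"
| "fX xs ys (Suc i) = int (xs ! Suc i) - (int (ys ! i) - fX xs ys i)"

definition fY :: "nat list \<Rightarrow> nat list \<Rightarrow> nat \<Rightarrow> int" where
  "fY xs ys i = int (ys ! i) - fX xs ys i"

definition dgraph :: "(nat \<Rightarrow> vert) \<Rightarrow> (nat \<Rightarrow> vert) \<Rightarrow> nat list \<Rightarrow> nat list \<Rightarrow> (vert \<times> nat \<times> vert) set" where
  "dgraph X Y xs ys =
     {(VA, xs ! 0, X 0) | _::unit. 0 < length xs}
   \<union> {(X i, xs ! Suc i, X (Suc i)) | i. Suc i < length xs}
   \<union> {(VA, ys ! 0, Y 0) | _::unit. 0 < length ys}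
   \<union> {(Y i, ys ! Suc i, Y (Suc i)) | i. Suc i < length ys}
   \<union> {(X i, nat (fY xs ys i), Y i) | i. i < length ys}
   \<union> {(Y i, nat (fX xs ys (Suc i)), X (Suc i)) | i. Suc i < length xs}"

definition chain_path :: "(nat \<Rightarrow> vert) \<Rightarrow> nat list \<Rightarrow> (vert \<times> nat \<times> vert \<times> bool) list" where
  "chain_path X xs = map (\<lambda>i. (if i = 0 then VA else X (i - 1), xs ! i, X i, True)) [0..<length xs]"

definition chain_end :: "(nat \<Rightarrow> vert) \<Rightarrow> nat \<Rightarrow> vert" where
  "chain_end X m = (if m = 0 then VA else X (m - 1))"

end

theory Submission
  imports Defs
begin

(* Order weights by dominance.  Attach to every vertex of D a potential
   h: h A = 0 and h at the i-th vertex of a chain is the sum of the first i fundamental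
   weights of that chain.  The recursion defining f is arranged exactly so that along
   every edge u -a-> v of D the potential changes by the indicator vector 1_S of an
   a-element set S of coordinates.  Since omega_a - 1_S >= 0 and omega_(n-a) + 1_S >= 0
   in the dominance order, every path from A to v has length at least h v, while the
   chain paths have length exactly h v.  Hence the chains are geodesics and, by
   antisymmetry of the dominance order, all geodesics from A have the same length. *)

definition root_nonneg :: "nat \<Rightarrow> (nat \<Rightarrow> int) \<Rightarrow> bool" where
  "root_nonneg n d \<longleftrightarrow> wle n (\<lambda>_. 0) d"

lemma wle_iff_root_nonneg: "wle n \<mu> \<nu> \<longleftrightarrow> root_nonneg n (\<lambda>i. \<nu> i - \<mu> i)"
  by (simp add: root_nonneg_def wle_def)

lemma root_nonneg_add:
  assumes "root_nonneg n d\<^sub>1" and "root_nonneg n d\<^sub>2"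
  shows "root_nonneg n (\<lambda>i. d\<^sub>1 i + d\<^sub>2 i)"
proof -
  from assms obtain t\<^sub>1 c\<^sub>1 t\<^sub>2 c\<^sub>2 where
    1: "\<forall>i\<in>{1..n}. d\<^sub>1 i = t\<^sub>1 + (\<Sum>j\<in>{i<..n}. int (c\<^sub>1 i j)) - (\<Sum>j\<in>{1..<i}. int (c\<^sub>1 j i))" and
    2: "\<forall>i\<in>{1..n}. d\<^sub>2 i = t\<^sub>2 + (\<Sum>j\<in>{i<..n}. int (c\<^sub>2 i j)) - (\<Sum>j\<in>{1..<i}. int (c\<^sub>2 j i))"
    unfolding root_nonneg_def wle_def by auto
  show ?thesis unfolding root_nonneg_def wle_def
    by (rule exI[of _ "t\<^sub>1 + t\<^sub>2"], rule exI[of _ "\<lambda>i j. c\<^sub>1 i j + c\<^sub>2 i j"])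
      (use 1 2 in \<open>auto simp: sum.distrib\<close>)
qed

lemma root_nonneg_cong:
  "root_nonneg n d \<Longrightarrow> (\<And>i. i \<in> {1..n} \<Longrightarrow> d i = d' i) \<Longrightarrow> root_nonneg n d'"
  unfolding root_nonneg_def wle_def by auto

(* The standard criterion: after shifting by a constant t, d is a nonnegative
   root combination if all partial sums are nonnegative and the total sum vanishes
   (take the coefficient of e_m - e_(m+1) to be the m-th partial sum). *)
lemma root_nonneg_partial_sums:
  assumes partial: "\<And>m. m \<in> {1..n} \<Longrightarrow> 0 \<le> (\<Sum>i=1..m. d i - t)"
    and total: "(\<Sum>i=1..n. d i - t) = 0"
  shows "root_nonneg n d"
proof -
  define S where "S m = (\<Sum>i=1..m. d i - t)" for m
  define c where "c i j = (if j = Suc i then nat (S i) else 0)" for i j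
  have S_Suc: "S (Suc m) = S m + (d (Suc m) - t)" for m by (simp add: S_def)
  have S_nonneg: "m \<le> n \<Longrightarrow> 0 \<le> S m" for m
    using partial[of m] by (cases "m = 0") (simp_all add: S_def)
  have out: "(\<Sum>j\<in>{i<..n}. int (c i j)) = (if i < n then S i else 0)" if "i \<le> n" for i
  proof -
    have "(\<Sum>j\<in>{i<..n}. int (c i j)) = (\<Sum>j\<in>{i<..n}. if j = Suc i then S i else 0)"
      using S_nonneg that by (intro sum.cong) (auto simp: c_def)
    then show ?thesis by (simp add: sum.delta)
  qed
  have inc: "(\<Sum>j\<in>{1..<i}. int (c j i)) = S (i - 1)" if "1 \<le> i" "i \<le> n" for i
  proof -
    have "(\<Sum>j\<in>{1..<i}. int (c j i)) = (\<Sum>j\<in>{1..<i}. if j = i - 1 then S (i - 1) else 0)"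
      using S_nonneg that by (intro sum.cong) (auto simp: c_def)
    then show ?thesis by (simp add: sum.delta S_def)
  qed
  show ?thesis unfolding root_nonneg_def wle_def
  proof (intro exI[of _ t] exI[of _ c] ballI)
    fix i assume i: "i \<in> {1..n}"
    then obtain m where m: "i = Suc m" by (cases i) auto
    have "S n = 0" using total by (simp add: S_def)
    then show "d i - 0 = t + (\<Sum>j\<in>{i<..n}. int (c i j)) - (\<Sum>j\<in>{1..<i}. int (c j i))"
      using out[of i] inc[of i] i S_Suc[of m] m by auto
  qed
qed

lemma root_comb_pairing:
  fixes n :: nat and w :: "nat \<Rightarrow> int" and c :: "nat \<Rightarrow> nat \<Rightarrow> nat"
  shows "(\<Sum>i=1..n. w i * ((\<Sum>j\<in>{i<..n}. int (c i j)) - (\<Sum>j\<in>{1..<i}. int (c j i))))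
   = (\<Sum>i=1..n. \<Sum>j\<in>{i<..n}. int (c i j) * (w i - w j))"
proof -
  have swap: "(\<Sum>i=1..n. \<Sum>j\<in>{1..<i}. g j i) = (\<Sum>i=1..n. \<Sum>j\<in>{i<..n}. g i j)"
    for g :: "nat \<Rightarrow> nat \<Rightarrow> int"
  proof -
    have "(\<Sum>i=1..n. \<Sum>j\<in>{1..<i}. g j i) = (\<Sum>i\<in>{1..n}. \<Sum>j\<in>{j. j\<in>{1..n} \<and> j < i}. g j i)"
      by (intro sum.cong refl) auto
    also have "\<dots> = (\<Sum>j\<in>{1..n}. \<Sum>i\<in>{i. i\<in>{1..n} \<and> j < i}. g j i)"
      by (rule sum.swap_restrict) auto
    also have "\<dots> = (\<Sum>i=1..n. \<Sum>j\<in>{i<..n}. g i j)"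
      by (intro sum.cong) auto
    finally show ?thesis .
  qed
  have "(\<Sum>i=1..n. w i * ((\<Sum>j\<in>{i<..n}. int (c i j)) - (\<Sum>j\<in>{1..<i}. int (c j i))))
     = (\<Sum>i=1..n. \<Sum>j\<in>{i<..n}. w i * int (c i j)) - (\<Sum>i=1..n. \<Sum>j\<in>{1..<i}. w i * int (c j i))"
    by (simp add: right_diff_distrib sum_distrib_left sum_subtractf)
  also have "(\<Sum>i=1..n. \<Sum>j\<in>{1..<i}. w i * int (c j i)) = (\<Sum>i=1..n. \<Sum>j\<in>{i<..n}. w j * int (c i j))"
    using swap[of "\<lambda>j i. w i * int (c j i)"] by simp
  finally show ?thesis
    by (simp add: sum_subtractf[symmetric] algebra_simps)
qed

(* Pairing with (1,...,1) and with (1,2,...,n) shows that a nonnegative root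
   combination which is constant on 1..n has all coefficients zero. *)
lemma root_comb_constant_vanishes:
  fixes c :: "nat \<Rightarrow> nat \<Rightarrow> nat"
  assumes n: "0 < n"
    and const: "\<And>i. i \<in> {1..n} \<Longrightarrow> (\<Sum>j\<in>{i<..n}. int (c i j)) - (\<Sum>j\<in>{1..<i}. int (c j i)) = t"
    and "1 \<le> i" "i < j" "j \<le> n"
  shows "c i j = 0"
proof -
  have "(\<Sum>i=1..n. (1::int) * t) = 0"
    using root_comb_pairing[where n=n and w="\<lambda>_. 1" and c=c] const by simp
  with n have "t = 0" by simp
  then have "(\<Sum>i=1..n. \<Sum>j\<in>{i<..n}. int (c i j) * (int i - int j)) = 0"
    using root_comb_pairing[where n=n and w=int and c=c] const by simp
  moreover have "(\<Sum>i=1..n. \<Sum>j\<in>{i<..n}. int (c i j) * (int j - int i))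
      = - (\<Sum>i=1..n. \<Sum>j\<in>{i<..n}. int (c i j) * (int i - int j))"
    by (simp add: sum_negf[symmetric] algebra_simps)
  ultimately have "(\<Sum>i=1..n. \<Sum>j\<in>{i<..n}. int (c i j) * (int j - int i)) = 0"
    by simp
  then have "\<forall>i\<in>{1..n}. (\<Sum>j\<in>{i<..n}. int (c i j) * (int j - int i)) = 0"
    by (subst (asm) sum_nonneg_eq_0_iff) (auto intro!: sum_nonneg)
  then have "\<forall>i\<in>{1..n}. \<forall>j\<in>{i<..n}. int (c i j) * (int j - int i) = 0"
    by (subst (asm) sum_nonneg_eq_0_iff) auto
  with \<open>1 \<le> i\<close> \<open>i < j\<close> \<open>j \<le> n\<close> show "c i j = 0"
    by force
qed

lemma root_nonneg_antisym:
  assumes "root_nonneg n d" and "root_nonneg n (\<lambda>i. - d i)"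
  shows "weq n (\<lambda>_. 0) d"
proof (cases "n = 0")
  case True
  then show ?thesis by (simp add: weq_def)
next
  case False
  then have n: "0 < n" by simp
  define F where "F c i = (\<Sum>j\<in>{i<..n}. int (c i j)) - (\<Sum>j\<in>{1..<i}. int (c j i))"
    for c :: "nat \<Rightarrow> nat \<Rightarrow> nat" and i
  obtain t c where d: "\<forall>i\<in>{1..n}. d i - 0 = t + F c i"
    using assms(1) unfolding root_nonneg_def wle_def F_def add_diff_eq by blast
  obtain t' c' where d': "\<forall>i\<in>{1..n}. - d i - 0 = t' + F c' i"
    using assms(2) unfolding root_nonneg_def wle_def F_def add_diff_eq by blast
  have "F (\<lambda>i j. c i j + c' i j) i = - (t + t')" if "i \<in> {1..n}" for i
  proof -
    have "F (\<lambda>i j. c i j + c' i j) i = F c i + F c' i" by (simp add: F_def sum.distrib)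
    with d d' that show ?thesis by fastforce
  qed
  then have "c i j = 0" if "1 \<le> i" "i < j" "j \<le> n" for i j
    using root_comb_constant_vanishes[OF n, of "\<lambda>i j. c i j + c' i j"] that
    unfolding F_def by blast
  then have "F c i = 0" if "i \<in> {1..n}" for i
    using that unfolding F_def by (auto intro!: sum.neutral)
  then show ?thesis using d unfolding weq_def by auto
qed

(* g - f is the indicator vector of an a-element subset of {1..b}.  Along every
   edge of D the potential constructed below changes by such a vector. *)
definition indicator_step :: "nat \<Rightarrow> nat \<Rightarrow> (nat \<Rightarrow> int) \<Rightarrow> (nat \<Rightarrow> int) \<Rightarrow> bool" where
  "indicator_step b a f g \<longleftrightarrow> (\<exists>S. S \<subseteq> {1..b} \<and> card S = a \<and> (\<forall>k. g k - f k = of_bool (k \<in> S)))"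

lemma omega_below: "a < n \<Longrightarrow> omega n a k = of_bool (k \<in> {1..a})"
  by (simp add: omega_def)

lemma indicator_step_omega:
  "a < n \<Longrightarrow> (\<And>k. g k - f k = omega n a k) \<Longrightarrow> indicator_step a a f g"
  unfolding indicator_step_def by (intro exI[of _ "{1..a}"]) (simp add: omega_below)

lemma indicator_step_mono:
  assumes "indicator_step b a f g" and "b \<le> b'"
  shows "indicator_step b' a f g"
proof -
  obtain S where "S \<subseteq> {1..b}" "card S = a" "\<forall>k. g k - f k = of_bool (k \<in> S)"
    using assms(1) unfolding indicator_step_def by blast
  moreover have "{1..b} \<subseteq> {1..b'}" using assms(2) by auto
  ultimately show ?thesis unfolding indicator_step_def by blast
qed

(* This is exactly the recursion f(l_i) = l_i - f(r_i), f(r_(i+1)) = r_(i+1) - f(l_i). *)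
lemma indicator_step_complement:
  assumes step: "indicator_step b a f g" and "b \<le> b'" and "b' < n"
    and next_omega: "\<And>k. g' k - f k = omega n b' k"
  shows "indicator_step b' (b' - a) g g'"
proof -
  obtain S where S: "S \<subseteq> {1..b}" "card S = a" "\<And>k. g k - f k = of_bool (k \<in> S)"
    using step unfolding indicator_step_def by blast
  have sub: "S \<subseteq> {1..b'}" using S(1) \<open>b \<le> b'\<close> by auto
  show ?thesis unfolding indicator_step_def
  proof (intro exI[of _ "{1..b'} - S"] conjI allI)
    show "card ({1..b'} - S) = b' - a"
      using sub S(2) by (simp add: card_Diff_subset finite_subset)
    show "g' k - g k = of_bool (k \<in> {1..b'} - S)" for k
      using next_omega[of k] S(3)[of k] omega_below[OF \<open>b' < n\<close>, of k]
      by (cases "k \<in> S") (use sub in auto)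
  qed simp
qed

lemma sum_omega_below:
  assumes "a < n" shows "(\<Sum>i=1..m. omega n a i) = int (min m a)"
proof -
  have "(\<Sum>i=1..m. omega n a i) = int (card ({1..m} \<inter> {1..a}))"
    by (simp add: omega_below[OF assms] Int_def conj_commute conj_left_commute)
  also have "{1..m} \<inter> {1..a} = {1..min m a}" by auto
  finally show ?thesis by simp
qed

(* omega_a is the largest indicator of an a-subset: omega_a - 1_S >= 0.
   This bounds an edge with label a traversed along its direction. *)
lemma omega_dominates_indicator:
  assumes step: "indicator_step n a f g" and "a < n"
  shows "root_nonneg n (\<lambda>k. omega n a k - (g k - f k))"
proof -
  obtain S where S: "S \<subseteq> {1..n}" "card S = a" "\<And>k. g k - f k = of_bool (k \<in> S)"
    using step unfolding indicator_step_def by blast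
  have partial: "(\<Sum>i=1..m. omega n a i - (g i - f i)) = int (min m a) - int (card ({1..m} \<inter> S))"
    for m using sum_omega_below[OF \<open>a < n\<close>, of m] by (simp add: S(3) sum_subtractf Int_def)
  have bound: "card ({1..m} \<inter> S) \<le> min m a" for m
    using card_mono[of "{1..m}" "{1..m} \<inter> S"] card_mono[of S "{1..m} \<inter> S"] S(1,2)
    by (simp add: finite_subset)
  have total: "card ({1..n} \<inter> S) = a" using S(1,2) by (simp add: Int_absorb1)
  show ?thesis
  proof (rule root_nonneg_partial_sums[where t=0])
    fix m show "0 \<le> (\<Sum>i=1..m. omega n a i - (g i - f i) - 0)"
      unfolding diff_0_right partial using bound[of m] by linarith
  next
    show "(\<Sum>i=1..n. omega n a i - (g i - f i) - 0) = 0"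
      unfolding diff_0_right partial using total \<open>a < n\<close> by simp
  qed
qed

(* Dually omega_(n-a) + 1_S >= 0 modulo constants (its coordinates sum to n - a + a),
   which bounds an edge with label a traversed against its direction. *)
lemma dual_omega_dominates_neg_indicator:
  assumes step: "indicator_step n a f g" and "0 < a" and "a < n"
  shows "root_nonneg n (\<lambda>k. omega n (n - a mod n) k - (f k - g k))"
proof -
  obtain S where S: "S \<subseteq> {1..n}" "card S = a" "\<And>k. g k - f k = of_bool (k \<in> S)"
    using step unfolding indicator_step_def by blast
  have dual: "n - a mod n = n - a" "n - a < n" using assms by auto
  have split: "card ({1..m} \<inter> S) + card ({1..m} - S) = m" for m
    using card_Int_Diff[of "{1..m}" S] by simp
  have partial: "(\<Sum>i=1..m. omega n (n - a mod n) i - (f i - g i) - 1)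
      = int (min m (n - a)) - int (card ({1..m} - S))" for m
  proof -
    have "(\<Sum>i=1..m. f i - g i) = - (\<Sum>i=1..m. g i - f i)"
      by (simp add: sum_negf[symmetric])
    also have "\<dots> = - int (card ({1..m} \<inter> S))"
      using S(3) by (simp add: Int_def)
    finally have "(\<Sum>i=1..m. f i - g i) = - int (card ({1..m} \<inter> S))" .
    then show ?thesis
      using sum_omega_below[OF dual(2), of m] split[of m] by (simp add: dual(1) sum_subtractf)
  qed
  have bound: "card ({1..m} - S) \<le> min m (n - a)" if "m \<le> n" for m
  proof -
    have "card ({1..m} - S) \<le> card ({1..n} - S)" using that by (intro card_mono) auto
    also have "\<dots> = n - a" using S(1,2) by (simp add: card_Diff_subset finite_subset)
    finally show ?thesis using card_mono[of "{1..m}" "{1..m} - S"] by simp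
  qed
  have total: "card ({1..n} - S) = n - a" using S(1,2) by (simp add: card_Diff_subset finite_subset)
  show ?thesis
  proof (rule root_nonneg_partial_sums[where t=1])
    fix m assume "m \<in> {1..n}"
    then show "0 \<le> (\<Sum>i=1..m. omega n (n - a mod n) i - (f i - g i) - 1)"
      unfolding partial using bound[of m] by simp
  next
    show "(\<Sum>i=1..n. omega n (n - a mod n) i - (f i - g i) - 1) = 0"
      unfolding partial using total by simp
  qed
qed

definition unit_potential :: "nat \<Rightarrow> ('v \<times> nat \<times> 'v) set \<Rightarrow> ('v \<Rightarrow> nat \<Rightarrow> int) \<Rightarrow> bool" where
  "unit_potential n E h \<longleftrightarrow> (\<forall>(u, a, v) \<in> E. 0 < a \<and> a < n \<and> indicator_step n a (h u) (h v))"

lemma path_len_Nil: "path_len n [] = (\<lambda>_. 0)"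
  by (simp add: path_len_def)

lemma path_len_Cons:
  "path_len n ((u, a, v, d) # ps) k = omega n (if d then a else n - a mod n) k + path_len n ps k"
  by (simp add: path_len_def)

lemma path_len_dominates_potential:
  assumes pot: "unit_potential n E h" and "is_path E s ps t"
  shows "wle n (\<lambda>k. h t k - h s k) (path_len n ps)"
  using \<open>is_path E s ps t\<close>
proof (induction ps arbitrary: s)
  case Nil
  then show ?case
    unfolding wle_def path_len_Nil by (intro exI[of _ 0] exI[of _ "\<lambda>_ _. 0"]) auto
next
  case (Cons e ps)
  obtain u a v d where e: "e = (u, a, v, d)" by (cases e)
  have edge: "(u, a, v) \<in> E" using Cons.prems by (simp add: e)
  then have a: "0 < a" "a < n" "indicator_step n a (h u) (h v)"
    using pot unfolding unit_potential_def by auto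
  show ?case
  proof (cases d)
    case True
    with Cons.prems have "s = u" and rest: "is_path E v ps t" by (simp_all add: e)
    have "root_nonneg n (\<lambda>k. path_len n ps k - (h t k - h v k))"
      using Cons.IH[OF rest] by (simp add: wle_iff_root_nonneg)
    with omega_dominates_indicator[OF a(3,2)]
    have "root_nonneg n (\<lambda>k. (omega n a k - (h v k - h u k)) + (path_len n ps k - (h t k - h v k)))"
      by (rule root_nonneg_add)
    then show ?thesis
      unfolding wle_iff_root_nonneg
      by (rule root_nonneg_cong) (simp add: e path_len_Cons True \<open>s = u\<close>)
  next
    case False
    with Cons.prems have "s = v" and rest: "is_path E u ps t" by (simp_all add: e)
    have "root_nonneg n (\<lambda>k. path_len n ps k - (h t k - h u k))"
      using Cons.IH[OF rest] by (simp add: wle_iff_root_nonneg)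
    with dual_omega_dominates_neg_indicator[OF a(3,1,2)]
    have "root_nonneg n (\<lambda>k. (omega n (n - a mod n) k - (h u k - h v k)) + (path_len n ps k - (h t k - h u k)))"
      by (rule root_nonneg_add)
    then show ?thesis
      unfolding wle_iff_root_nonneg
      by (rule root_nonneg_cong) (simp add: e path_len_Cons False \<open>s = v\<close>)
  qed
qed

lemma weq_common_base: "weq n \<mu> \<nu> \<Longrightarrow> weq n \<mu> \<rho> \<Longrightarrow> weq n \<nu> \<rho>"
proof -
  assume "weq n \<mu> \<nu>" "weq n \<mu> \<rho>"
  then obtain t t' where "\<forall>i\<in>{1..n}. \<nu> i - \<mu> i = t" "\<forall>i\<in>{1..n}. \<rho> i - \<mu> i = t'"
    unfolding weq_def by blast
  then have "\<forall>i\<in>{1..n}. \<rho> i - \<nu> i = t' - t" by force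
  then show "weq n \<nu> \<rho>" unfolding weq_def by blast
qed

lemma potential_path_geodesic:
  assumes pot: "unit_potential n E h"
    and path: "is_path E s cp t" and tight: "\<And>k. path_len n cp k = h t k - h s k"
  shows "geodesic n E s t cp"
  unfolding geodesic_def
proof (intro conjI path notI)
  assume "\<exists>qs. is_path E s qs t \<and> wless n (path_len n qs) (path_len n cp)"
  then obtain qs where qs: "is_path E s qs t" "wle n (path_len n qs) (path_len n cp)"
    "\<not> weq n (path_len n qs) (path_len n cp)" unfolding wless_def by auto
  have "root_nonneg n (\<lambda>k. path_len n cp k - path_len n qs k)"
    using qs(2) by (simp add: wle_iff_root_nonneg)
  moreover have "root_nonneg n (\<lambda>k. - (path_len n cp k - path_len n qs k))"
    using path_len_dominates_potential[OF pot qs(1)]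
    unfolding wle_iff_root_nonneg tight[symmetric] by simp
  ultimately have "weq n (\<lambda>_. 0) (\<lambda>k. path_len n cp k - path_len n qs k)"
    using root_nonneg_antisym by blast
  with qs(3) show False unfolding weq_def by auto
qed

lemma potential_path_coherent:
  assumes pot: "unit_potential n E h"
    and path: "is_path E s cp t" and tight: "\<And>k. path_len n cp k = h t k - h s k"
  shows "coherent n E s t"
proof -
  have cp_len: "path_len n cp = (\<lambda>k. h t k - h s k)" using tight by blast
  have same_len: "weq n (path_len n cp) (path_len n ps)" if "geodesic n E s t ps" for ps
  proof (rule ccontr)
    assume "\<not> ?thesis"
    moreover have "is_path E s ps t" using that unfolding geodesic_def by simp
    ultimately have "wless n (path_len n cp) (path_len n ps)"
      using path_len_dominates_potential[OF pot] unfolding wless_def cp_len by auto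
    with that path show False unfolding geodesic_def by auto
  qed
  show ?thesis unfolding coherent_def
  proof (intro allI impI)
    fix ps qs assume "geodesic n E s t ps \<and> geodesic n E s t qs"
    with same_len show "weq n (path_len n ps) (path_len n qs)"
      by (blast intro: weq_common_base)
  qed
qed

definition height :: "nat \<Rightarrow> nat list \<Rightarrow> nat \<Rightarrow> nat \<Rightarrow> int" where
  "height n zs m = (\<lambda>k. \<Sum>j<m. omega n (zs ! j) k)"

lemma height_0 [simp]: "height n zs 0 = (\<lambda>_. 0)"
  by (simp add: height_def)

lemma height_Suc: "height n zs (Suc m) k = height n zs m k + omega n (zs ! m) k"
  by (simp add: height_def)

lemma height_cong: "(\<And>j. j < m \<Longrightarrow> zs ! j = ws ! j) \<Longrightarrow> height n zs m = height n ws m"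
  by (simp add: height_def)

lemma is_path_snoc:
  "is_path E s ps w \<Longrightarrow> (w, a, v) \<in> E \<Longrightarrow> is_path E s (ps @ [(w, a, v, True)]) v"
  by (induction ps arbitrary: s) auto

lemma chain_path_snoc:
  "chain_path Z (zs @ [z]) = chain_path Z zs @ [(chain_end Z (length zs), z, Z (length zs), True)]"
  by (simp add: chain_path_def chain_end_def nth_append)

lemma chain_path_tight:
  assumes "\<And>i. i < length zs \<Longrightarrow> (chain_end Z i, zs ! i, Z i) \<in> E"
  shows "is_path E VA (chain_path Z zs) (chain_end Z (length zs))
    \<and> path_len n (chain_path Z zs) = height n zs (length zs)"
  using assms
proof (induction zs rule: rev_induct)
  case Nil
  then show ?case by (simp add: chain_path_def chain_end_def path_len_def)
next
  case (snoc z zs)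
  have edge: "(chain_end Z (length zs), z, Z (length zs)) \<in> E"
    using snoc.prems[of "length zs"] by simp
  have "(chain_end Z i, zs ! i, Z i) \<in> E" if "i < length zs" for i
    using snoc.prems[of i] that by (simp add: nth_append)
  then have path: "is_path E VA (chain_path Z zs) (chain_end Z (length zs))"
    and len: "path_len n (chain_path Z zs) = height n zs (length zs)"
    using snoc.IH by blast+
  have "height n (zs @ [z]) (length zs) = height n zs (length zs)"
    by (rule height_cong) (simp add: nth_append)
  then have "path_len n (chain_path Z (zs @ [z])) = height n (zs @ [z]) (length (zs @ [z]))"
    using len by (simp add: chain_path_snoc fun_eq_iff height_Suc path_len_def)
  moreover have "is_path E VA (chain_path Z (zs @ [z])) (chain_end Z (length (zs @ [z])))"
    using is_path_snoc[OF path edge] by (simp add: chain_path_snoc chain_end_def)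
  ultimately show ?case by blast
qed

lemma chain_prefix_tight:
  assumes edges: "\<And>i. i < length zs \<Longrightarrow> (chain_end Z i, zs ! i, Z i) \<in> E" and "m \<le> length zs"
  shows "is_path E VA (chain_path Z (take m zs)) (chain_end Z m)
    \<and> path_len n (chain_path Z (take m zs)) = height n zs m"
proof -
  have "(chain_end Z i, take m zs ! i, Z i) \<in> E" if "i < length (take m zs)" for i
    using edges[of i] that by simp
  moreover have "height n (take m zs) m = height n zs m"
    by (rule height_cong) simp
  ultimately show ?thesis
    using chain_path_tight[of "take m zs" Z E n] \<open>m \<le> length zs\<close> by (simp add: min_absorb2)
qed

(* Two label sequences x_1 < y_1 < x_2 < y_2 < ... in {1..n-1}, the first one
   starting.  This is the hypothesis r_1 < l_1 < r_2 < ... of the theorem (or its mirror). *)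
locale interlaced =
  fixes n :: nat and xs ys :: "nat list"
  assumes labels_range: "set xs \<union> set ys \<subseteq> {1..<n}"
    and length_ys: "length ys \<le> length xs" "length xs \<le> Suc (length ys)"
    and x_lt_y: "\<And>i. i < length ys \<Longrightarrow> xs ! i < ys ! i"
    and y_lt_x: "\<And>i. Suc i < length xs \<Longrightarrow> ys ! i < xs ! Suc i"
begin

lemma xs_range: "i < length xs \<Longrightarrow> 0 < xs ! i \<and> xs ! i < n"
  using labels_range nth_mem[of i xs] by fastforce

lemma ys_range: "i < length ys \<Longrightarrow> 0 < ys ! i \<and> ys ! i < n"
  using labels_range nth_mem[of i ys] by fastforce

lemma f_bounds:
  "(i < length xs \<longrightarrow> 0 < fX xs ys i \<and> fX xs ys i \<le> int (xs ! i))
   \<and> (i < length ys \<longrightarrow> 0 < fY xs ys i \<and> fY xs ys i < int (ys ! i))"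
proof (induction i)
  case 0
  have "0 < length xs \<Longrightarrow> 0 < xs ! 0" using xs_range by blast
  moreover have "0 < length ys \<Longrightarrow> xs ! 0 < ys ! 0" using x_lt_y by blast
  ultimately show ?case using length_ys(1) by (fastforce simp: fY_def)
next
  case (Suc i)
  have fX: "0 < fX xs ys (Suc i) \<and> fX xs ys (Suc i) \<le> int (xs ! Suc i)" if "Suc i < length xs"
  proof -
    have "i < length ys" using that length_ys(2) by simp
    then show ?thesis using Suc.IH y_lt_x[OF that] by (simp add: fY_def[symmetric])
  qed
  moreover have "0 < fY xs ys (Suc i) \<and> fY xs ys (Suc i) < int (ys ! Suc i)" if "Suc i < length ys"
    using fX x_lt_y[OF that] that length_ys(1) by (simp add: fY_def)
  ultimately show ?case by blast
qed

lemma fX_bounds: "i < length xs \<Longrightarrow> 0 < fX xs ys i \<and> fX xs ys i \<le> int (xs ! i)"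
  using f_bounds by blast

lemma fY_bounds: "i < length ys \<Longrightarrow> 0 < fY xs ys i \<and> fY xs ys i < int (ys ! i)"
  using f_bounds by blast

(* The two halves of the recursion, via indicator_step_complement: crossing
   X_i -> Y_i and Y_i -> X_(i+1) changes the potential by an indicator of size f(y_i)
   resp. f(x_(i+1)). *)
lemma y_step_from_x_step:
  assumes i: "i < length ys"
    and "indicator_step (xs ! i) (nat (fX xs ys i)) (height n ys i) (height n xs (Suc i))"
  shows "indicator_step (ys ! i) (nat (fY xs ys i)) (height n xs (Suc i)) (height n ys (Suc i))"
proof -
  have "indicator_step (ys ! i) (ys ! i - nat (fX xs ys i)) (height n xs (Suc i)) (height n ys (Suc i))"
    using assms(2) less_imp_le[OF x_lt_y[OF i]] ys_range[OF i]
    by (intro indicator_step_complement[where n=n]) (simp_all add: height_Suc[of n ys i])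
  moreover have "ys ! i - nat (fX xs ys i) = nat (fY xs ys i)"
    using fX_bounds[of i] x_lt_y[OF i] i length_ys(1) by (simp add: fY_def, arith)
  ultimately show ?thesis by simp
qed

lemma x_step_from_y_step:
  assumes i: "Suc i < length xs"
    and "indicator_step (ys ! i) (nat (fY xs ys i)) (height n xs (Suc i)) (height n ys (Suc i))"
  shows "indicator_step (xs ! Suc i) (nat (fX xs ys (Suc i))) (height n ys (Suc i)) (height n xs (Suc (Suc i)))"
proof -
  have i': "i < length ys" using i length_ys(2) by simp
  have "indicator_step (xs ! Suc i) (xs ! Suc i - nat (fY xs ys i)) (height n ys (Suc i)) (height n xs (Suc (Suc i)))"
    using assms(2) less_imp_le[OF y_lt_x[OF i]] xs_range[OF i]
    by (intro indicator_step_complement[where n=n]) (simp_all add: height_Suc[of n xs "Suc i"])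
  moreover have "xs ! Suc i - nat (fY xs ys i) = nat (fX xs ys (Suc i))"
    using fY_bounds[OF i'] y_lt_x[OF i] by (simp add: fY_def, arith)
  ultimately show ?thesis by simp
qed

lemma potential_steps:
  "(i < length xs \<longrightarrow> indicator_step (xs ! i) (nat (fX xs ys i)) (height n ys i) (height n xs (Suc i)))
   \<and> (i < length ys \<longrightarrow> indicator_step (ys ! i) (nat (fY xs ys i)) (height n xs (Suc i)) (height n ys (Suc i)))"
proof (induction i)
  case 0
  have "indicator_step (xs ! 0) (nat (fX xs ys 0)) (height n ys 0) (height n xs (Suc 0))"
    if "0 < length xs"
    using xs_range[OF that] indicator_step_omega[of "xs ! 0" n "height n xs (Suc 0)" "height n ys 0"]
    by (simp add: height_Suc)
  moreover have "0 < length ys \<Longrightarrow> 0 < length xs" using length_ys(1) by linarith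
  ultimately show ?case using y_step_from_x_step[of 0] by blast
next
  case (Suc i)
  moreover have "Suc i < length xs \<Longrightarrow> i < length ys" "Suc i < length ys \<Longrightarrow> Suc i < length xs"
    using length_ys by linarith+
  ultimately show ?case using x_step_from_y_step[of i] y_step_from_x_step[of "Suc i"] by blast
qed

end

lemma height_step:
  assumes "i < length zs" and "zs ! i < n"
  shows "indicator_step n (zs ! i) (height n zs i) (height n zs (Suc i))"
  using assms indicator_step_omega[of "zs ! i" n "height n zs (Suc i)" "height n zs i"]
  by (auto simp: height_Suc intro: indicator_step_mono)

lemma dgraph_edge_cases:
  assumes "(u, a, v) \<in> dgraph X Y xs ys"
  obtains (chain_X) i where "i < length xs" "u = chain_end X i" "a = xs ! i" "v = X i"
    | (chain_Y) i where "i < length ys" "u = chain_end Y i" "a = ys ! i" "v = Y i"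
    | (cross_XY) i where "i < length ys" "u = X i" "a = nat (fY xs ys i)" "v = Y i"
    | (cross_YX) i where "Suc i < length xs" "u = Y i" "a = nat (fX xs ys (Suc i))" "v = X (Suc i)"
proof -
  from assms consider
      "0 < length xs" "(u, a, v) = (VA, xs ! 0, X 0)"
    | i where "Suc i < length xs" "(u, a, v) = (X i, xs ! Suc i, X (Suc i))"
    | "0 < length ys" "(u, a, v) = (VA, ys ! 0, Y 0)"
    | i where "Suc i < length ys" "(u, a, v) = (Y i, ys ! Suc i, Y (Suc i))"
    | i where "i < length ys" "(u, a, v) = (X i, nat (fY xs ys i), Y i)"
    | i where "Suc i < length xs" "(u, a, v) = (Y i, nat (fX xs ys (Suc i)), X (Suc i))"
    unfolding dgraph_def by blast
  then show thesis
    by cases (use chain_X[of 0] chain_X chain_Y[of 0] chain_Y cross_XY cross_YX in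
        \<open>auto simp: chain_end_def\<close>)
qed

lemma dgraph_chain_edges:
  "i < length xs \<Longrightarrow> (chain_end X i, xs ! i, X i) \<in> dgraph X Y xs ys"
  "i < length ys \<Longrightarrow> (chain_end Y i, ys ! i, Y i) \<in> dgraph X Y xs ys"
  unfolding dgraph_def chain_end_def by (cases i; auto)+

lemma chain_prefix_geodesic:
  assumes pot: "unit_potential n E h"
    and edges: "\<And>i. i < length zs \<Longrightarrow> (chain_end Z i, zs ! i, Z i) \<in> E"
    and h_end: "\<And>m. h (chain_end Z m) = height n zs m" and "m \<le> length zs"
  shows "geodesic n E VA (chain_end Z m) (chain_path Z (take m zs)) \<and> coherent n E VA (chain_end Z m)"
proof -
  have "h VA = (\<lambda>_. 0)" using h_end[of 0] by (simp add: chain_end_def)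
  then have "path_len n (chain_path Z (take m zs)) k = h (chain_end Z m) k - h VA k" for k
    using chain_prefix_tight[OF edges \<open>m \<le> length zs\<close>] h_end by simp
  with chain_prefix_tight[OF edges \<open>m \<le> length zs\<close>] show ?thesis
    using potential_path_geodesic[OF pot] potential_path_coherent[OF pot] by blast
qed

locale interlaced_graph = interlaced +
  fixes X Y :: "nat \<Rightarrow> vert" and h :: "vert \<Rightarrow> nat \<Rightarrow> int"
  assumes h_A: "h VA = (\<lambda>_. 0)"
    and h_X: "\<And>i. h (X i) = height n xs (Suc i)"
    and h_Y: "\<And>i. h (Y i) = height n ys (Suc i)"
begin

lemma h_chain_end: "h (chain_end X m) = height n xs m" "h (chain_end Y m) = height n ys m"
  by (cases m; simp add: chain_end_def h_A h_X h_Y)+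

lemma dgraph_unit_potential: "unit_potential n (dgraph X Y xs ys) h"
  unfolding unit_potential_def
proof (clarify)
  fix u a v assume "(u, a, v) \<in> dgraph X Y xs ys"
  then show "0 < a \<and> a < n \<and> indicator_step n a (h u) (h v)"
  proof (cases rule: dgraph_edge_cases)
    case (chain_X i)
    then show ?thesis using xs_range[of i] height_step[of i xs n] by (simp add: h_chain_end h_X)
  next
    case (chain_Y i)
    then show ?thesis using ys_range[of i] height_step[of i ys n] by (simp add: h_chain_end h_Y)
  next
    case (cross_XY i)
    then show ?thesis
      using fY_bounds[of i] ys_range[of i] potential_steps[of i]
      by (auto simp: h_X h_Y intro: indicator_step_mono)
  next
    case (cross_YX i)
    then show ?thesis
      using fX_bounds[of "Suc i"] xs_range[of "Suc i"] potential_steps[of "Suc i"]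
      by (auto simp: h_X h_Y intro: indicator_step_mono)
  qed
qed

lemma interlaced_graph_geodesics:
  "let p = length xs; q = length ys; E = dgraph X Y xs ys in
      geodesic n E VA (chain_end X p) (chain_path X xs) \<and>
      weq n (path_len n (chain_path X xs)) (\<lambda>i. \<Sum>j<p. omega n (xs ! j) i) \<and>
      geodesic n E VA (chain_end Y q) (chain_path Y ys) \<and>
      weq n (path_len n (chain_path Y ys)) (\<lambda>i. \<Sum>j<q. omega n (ys ! j) i) \<and>
      (\<forall>v \<in> {VA} \<union> X ` {..<p} \<union> Y ` {..<q}. coherent n E VA v)"
proof -
  let ?E = "dgraph X Y xs ys"
  note X_chain = chain_prefix_geodesic[OF dgraph_unit_potential dgraph_chain_edges(1) h_chain_end(1)]
  note Y_chain = chain_prefix_geodesic[OF dgraph_unit_potential dgraph_chain_edges(2) h_chain_end(2)]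
  have lengths: "path_len n (chain_path X xs) = height n xs (length xs)"
    "path_len n (chain_path Y ys) = height n ys (length ys)"
    using chain_prefix_tight[OF dgraph_chain_edges(1), of xs "length xs"]
      chain_prefix_tight[OF dgraph_chain_edges(2), of ys "length ys"] by simp_all
  have "coherent n ?E VA v" if "v \<in> {VA} \<union> X ` {..<length xs} \<union> Y ` {..<length ys}" for v
  proof -
    from that consider "v = chain_end X 0" | i where "i < length xs" "v = chain_end X (Suc i)"
      | i where "i < length ys" "v = chain_end Y (Suc i)"
      by (auto simp: chain_end_def)
    then show ?thesis using X_chain Y_chain by cases auto
  qed
  moreover have "weq n \<mu> \<mu>" for \<mu> by (simp add: weq_def)
  ultimately show ?thesis
    using X_chain[of "length xs"] Y_chain[of "length ys"] unfolding Let_def lengths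
    by (simp add: height_def)
qed

end

lemma sorted_list_of_subset:
  assumes "finite A" and "B \<subseteq> A"
  shows "sorted_list_of_set B = filter (\<lambda>x. x \<in> B) (sorted_list_of_set A)"
proof (rule strict_sorted_equal)
  show "sorted_wrt (<) (filter (\<lambda>x. x \<in> B) (sorted_list_of_set A))"
    by (simp add: sorted_wrt_filter)
  show "set (sorted_list_of_set B) = set (filter (\<lambda>x. x \<in> B) (sorted_list_of_set A))"
    using assms finite_subset[OF assms(2,1)] by auto
qed simp

lemma filter_alternating:
  assumes "\<And>m. m < length U \<Longrightarrow> P (U ! m) \<longleftrightarrow> even m"
  shows "filter P U = map (\<lambda>i. U ! (2 * i)) [0..<(length U + 1) div 2]"
  using assms
proof (induction U rule: induct_list012)
  case (3 x y zs)
  have "P x" "\<not> P y" using "3.prems"[of 0] "3.prems"[of 1] by simp_all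
  moreover have "P (zs ! m) \<longleftrightarrow> even m" if "m < length zs" for m
    using "3.prems"[of "Suc (Suc m)"] that by simp
  ultimately have "filter P (x # y # zs) = x # map (\<lambda>i. zs ! (2 * i)) [0..<(length zs + 1) div 2]"
    using "3.IH"(1) by simp
  also have "\<dots> = map (\<lambda>i. (x # y # zs) ! (2 * i)) [0..<(length (x # y # zs) + 1) div 2]"
    using map_upt_Suc[of "\<lambda>i. (x # y # zs) ! (2 * i)" "(length zs + 1) div 2"] by simp
  finally show ?case .
qed auto

lemma filter_alternating_odd:
  assumes "\<And>m. m < length U \<Longrightarrow> P (U ! m) \<longleftrightarrow> even m"
  shows "filter (\<lambda>x. \<not> P x) U = map (\<lambda>i. U ! (2 * i + 1)) [0..<length U div 2]"
proof (cases U)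
  case (Cons x U')
  have "P x" using assms[of 0] Cons by simp
  moreover have "\<not> P (U' ! m) \<longleftrightarrow> even m" if "m < length U'" for m
    using assms[of "Suc m"] that Cons by simp
  ultimately show ?thesis
    using filter_alternating[of U' "\<lambda>x. \<not> P x"] Cons by simp
qed simp

lemma alternating_sets_interlaced:
  fixes Xs Ys :: "nat set"
  assumes range: "Xs \<union> Ys \<subseteq> {1..<n}" and disjoint: "Xs \<inter> Ys = {}"
    and alternating: "\<forall>m < length (sorted_list_of_set (Xs \<union> Ys)).
        (sorted_list_of_set (Xs \<union> Ys) ! m \<in> Xs \<longleftrightarrow> even m)"
  shows "interlaced n (sorted_list_of_set Xs) (sorted_list_of_set Ys)"
proof -
  define U where "U = sorted_list_of_set (Xs \<union> Ys)"
  have fin: "finite (Xs \<union> Ys)" using range finite_subset by blast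
  have xs: "sorted_list_of_set Xs = map (\<lambda>i. U ! (2 * i)) [0..<(length U + 1) div 2]"
    using sorted_list_of_subset[OF fin, of Xs] filter_alternating[of U "\<lambda>x. x \<in> Xs"] alternating
    by (simp add: U_def)
  have "filter (\<lambda>x. x \<in> Ys) U = filter (\<lambda>x. x \<notin> Xs) U"
    using disjoint fin by (intro filter_cong) (auto simp: U_def)
  then have ys: "sorted_list_of_set Ys = map (\<lambda>i. U ! (2 * i + 1)) [0..<length U div 2]"
    using sorted_list_of_subset[OF fin, of Ys] filter_alternating_odd[of U "\<lambda>x. x \<in> Xs"] alternating
    by (simp add: U_def)
  have increasing: "a < b \<Longrightarrow> b < length U \<Longrightarrow> U ! a < U ! b" for a b
    using strict_sorted_list_of_set unfolding U_def sorted_wrt_iff_nth_less by blast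
  show ?thesis
  proof
    show "set (sorted_list_of_set Xs) \<union> set (sorted_list_of_set Ys) \<subseteq> {1..<n}"
      using range fin by simp
  qed (auto simp: xs ys intro!: increasing)
qed

lemma alternating_chains:
  fixes Xs Ys :: "nat set" and X Y :: "nat \<Rightarrow> vert"
  assumes range: "Xs \<union> Ys \<subseteq> {1..<n}" and disjoint: "Xs \<inter> Ys = {}"
    and vertices: "(X, Y) = (VR, VL) \<or> (X, Y) = (VL, VR)"
    and alternating: "\<forall>m < length (sorted_list_of_set (Xs \<union> Ys)).
        (sorted_list_of_set (Xs \<union> Ys) ! m \<in> Xs \<longleftrightarrow> even m)"
  shows "let xs = sorted_list_of_set Xs; ys = sorted_list_of_set Ys;
         p = length xs; q = length ys; E = dgraph X Y xs ys in
      (\<forall>i<p. 0 < fX xs ys i \<and> fX xs ys i \<le> int (xs ! i) \<and> fX xs ys i \<in> {1..int n - 1}) \<and>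
      (\<forall>i<q. 0 < fY xs ys i \<and> fY xs ys i < int (ys ! i) \<and> fY xs ys i \<in> {1..int n - 1}) \<and>
      geodesic n E VA (chain_end X p) (chain_path X xs) \<and>
      weq n (path_len n (chain_path X xs)) (\<lambda>i. \<Sum>j<p. omega n (xs ! j) i) \<and>
      geodesic n E VA (chain_end Y q) (chain_path Y ys) \<and>
      weq n (path_len n (chain_path Y ys)) (\<lambda>i. \<Sum>j<q. omega n (ys ! j) i) \<and>
      (\<forall>v \<in> {VA} \<union> X ` {..<p} \<union> Y ` {..<q}. coherent n E VA v)"
proof -
  define xs ys where "xs = sorted_list_of_set Xs" and "ys = sorted_list_of_set Ys"
  then have "interlaced n xs ys"
    using alternating_sets_interlaced[OF range disjoint alternating] by blast
  define h where "h v = (case v of VA \<Rightarrow> (\<lambda>_. 0)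
      | VR i \<Rightarrow> height n (if X = VR then xs else ys) (Suc i)
      | VL i \<Rightarrow> height n (if X = VR then ys else xs) (Suc i))" for v
  have "VL \<noteq> VR" by (simp add: fun_eq_iff)
  interpret interlaced_graph n xs ys X Y h
    by (rule interlaced_graph.intro[OF \<open>interlaced n xs ys\<close>], unfold_locales)
      (use vertices \<open>VL \<noteq> VR\<close> in \<open>auto simp: h_def\<close>)
  have "0 < fX xs ys i \<and> fX xs ys i \<le> int (xs ! i) \<and> fX xs ys i \<in> {1..int n - 1}"
    if "i < length xs" for i using fX_bounds[OF that] xs_range[OF that] by simp
  moreover have "0 < fY xs ys i \<and> fY xs ys i < int (ys ! i) \<and> fY xs ys i \<in> {1..int n - 1}"
    if "i < length ys" for i using fY_bounds[OF that] ys_range[OF that] by simp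
  ultimately show ?thesis
    using interlaced_graph_geodesics unfolding xs_def ys_def Let_def by blast
qed

(* Only the facts that R and L are disjoint subsets of {1..n-1} are needed about
   the weight c; both orderings then follow from alternating_chains. *)
theorem mainTheorem2:
  fixes n k :: nat and c :: "nat \<Rightarrow> int"
  assumes "0 < k" and "k < n"
    and "\<forall>j\<in>{1..n}. c j \<in> {0, 1}"
    and "card {j\<in>{1..n}. c j = 1} = k"
  defines "Rs \<equiv> {j\<in>{1..n-1}. c j - c (Suc j) = 1}"
    and "Ls \<equiv> {j\<in>{1..n-1}. c j - c (Suc j) = -1}"
  shows "\<forall>(Xs, Ys, X, Y) \<in> {(Rs, Ls, VR, VL), (Ls, Rs, VL, VR)}.
    (\<forall>m < length (sorted_list_of_set (Xs \<union> Ys)).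
        (sorted_list_of_set (Xs \<union> Ys) ! m \<in> Xs \<longleftrightarrow> even m)) \<longrightarrow>
    (let xs = sorted_list_of_set Xs; ys = sorted_list_of_set Ys;
         p = length xs; q = length ys; E = dgraph X Y xs ys in
      (\<forall>i<p. 0 < fX xs ys i \<and> fX xs ys i \<le> int (xs ! i) \<and> fX xs ys i \<in> {1..int n - 1}) \<and>
      (\<forall>i<q. 0 < fY xs ys i \<and> fY xs ys i < int (ys ! i) \<and> fY xs ys i \<in> {1..int n - 1}) \<and>
      geodesic n E VA (chain_end X p) (chain_path X xs) \<and>
      weq n (path_len n (chain_path X xs)) (\<lambda>i. \<Sum>j<p. omega n (xs ! j) i) \<and>
      geodesic n E VA (chain_end Y q) (chain_path Y ys) \<and>
      weq n (path_len n (chain_path Y ys)) (\<lambda>i. \<Sum>j<q. omega n (ys ! j) i) \<and>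
      (\<forall>v \<in> {VA} \<union> X ` {..<p} \<union> Y ` {..<q}. coherent n E VA v))"
proof -
  have "Rs \<union> Ls \<subseteq> {1..<n}" "Ls \<union> Rs \<subseteq> {1..<n}" unfolding Rs_def Ls_def by auto
  moreover have "Rs \<inter> Ls = {}" "Ls \<inter> Rs = {}" unfolding Rs_def Ls_def by auto
  ultimately show ?thesis
    unfolding ball_simps prod.case by (blast intro: alternating_chains)
qed

end
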